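(* Let $g,g'\in G$ and $C\ge1$, and suppose $q_g\le C^2q_{g'}$ as quadratic forms on $\mathfrak g$. Then for all $\alpha,\beta\in\Sigma\cup\{0\}$, $$\big\|\mathrm{Ad}(k_gk_{g'}^{-1})_{\alpha,\beta}\big\|\le C\,e^{\alpha(\kappa(g'))-\beta(\kappa(g))}.$$
   Context: $G$ is a real semi-simple Lie group with finite center and Lie algebra $\mathfrak g$, $B$ its Killing form, $\theta$ a Cartan involution with $\mathfrak g=\mathfrak k\oplus\mathfrak p$ its $\pm1$ eigenspaces, $\mathfrak a\subset\mathfrak p$ maximal abelian, $\Sigma\subset\mathfrak a^*$ the restricted roots, $\mathfrak g=\mathfrak g_0\oplus\bigoplus_{\alpha\in\Sigma}\mathfrak g_\alpha$ the restricted root decomposition (with $\mathfrak g_\alpha=\{x:[a,x]=\alpha(a)x\ \forall a\in\mathfrak a\}$, and $0$ regarded as the weight of $\mathfrak g_0$), $K$ the maximal compact subgroup with Lie algebra $\mathfrak k$, $A=\exp\mathfrak a$. Fix a Weyl chamber $\mathcal W\subset\mathfrak a$. Every $g\in G$ has a KAK decomposition $g=k'_g\exp(\kappa(g))k_g$ with $k_g,k'_g\in K$ and $\kappa(g)\in\mathcal W$ (the Cartan projection); fix such a choice for $g$ and $g'$. The norm on $\mathfrak g$ is $\|x\|^2=-B(x,\theta x)$ (which is $\mathrm{Ad}(K)$-invariant, the $\mathfrak g_\alpha$ being mutually orthogonal), and $q_g(x)=\|\mathrm{Ad}(g)x\|^2$. For $H\in\mathrm{End}(\mathfrak g)$ and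 $\alpha,\beta\in\Sigma\cup\{0\}$, $H_{\alpha,\beta}:\mathfrak g_\alpha\to\mathfrak g_\beta$ denotes the map sending $x\in\mathfrak g_\alpha$ to the orthogonal projection of $H(x)$ onto $\mathfrak g_\beta$; $\|\cdot\|$ on it is the operator norm. *)

theory Defs
  imports "HOL-Analysis.Analysis" "HOL-Algebra.Group"
begin

text \<open>Finite-dimensional real Lie algebras: the underlying space is a type of class
euclidean_space (its inner product is only used as auxiliary coordinates, e.g. for the trace).\<close>

definition lie_algebra :: "('g::euclidean_space \<Rightarrow> 'g \<Rightarrow> 'g) \<Rightarrow> bool" where
  "lie_algebra br \<longleftrightarrow> (\<forall>x. linear (br x)) \<and> (\<forall>y. linear (\<lambda>x. br x y)) \<and>
     (\<forall>x. br x x = 0) \<and>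
     (\<forall>x y z. br x (br y z) + br y (br z x) + br z (br x y) = 0)"

definition lie_ideal :: "('g::euclidean_space \<Rightarrow> 'g \<Rightarrow> 'g) \<Rightarrow> 'g set \<Rightarrow> bool" where
  "lie_ideal br I \<longleftrightarrow> subspace I \<and> (\<forall>x i. i \<in> I \<longrightarrow> br x i \<in> I)"

fun derived_series :: "('g::euclidean_space \<Rightarrow> 'g \<Rightarrow> 'g) \<Rightarrow> 'g set \<Rightarrow> nat \<Rightarrow> 'g set" where
  "derived_series br I 0 = I"
| "derived_series br I (Suc n) =
     span {br a b | a b. a \<in> derived_series br I n \<and> b \<in> derived_series br I n}"

definition solvable_ideal :: "('g::euclidean_space \<Rightarrow> 'g \<Rightarrow> 'g) \<Rightarrow> 'g set \<Rightarrow> bool" where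
  "solvable_ideal br I \<longleftrightarrow> lie_ideal br I \<and> (\<exists>n. derived_series br I n = {0})"

definition semisimple_lie_algebra :: "('g::euclidean_space \<Rightarrow> 'g \<Rightarrow> 'g) \<Rightarrow> bool" where
  "semisimple_lie_algebra br \<longleftrightarrow> lie_algebra br \<and>
     (\<forall>I. solvable_ideal br I \<longrightarrow> I = {0})"

definition trace_op :: "('g::euclidean_space \<Rightarrow> 'g) \<Rightarrow> real" where
  "trace_op f = (\<Sum>b\<in>Basis. inner (f b) b)"

definition killing :: "('g::euclidean_space \<Rightarrow> 'g \<Rightarrow> 'g) \<Rightarrow> 'g \<Rightarrow> 'g \<Rightarrow> real" where
  "killing br x y = trace_op (\<lambda>z. br x (br y z))"

definition lie_automorphism :: "('g::euclidean_space \<Rightarrow> 'g \<Rightarrow> 'g) \<Rightarrow> ('g \<Rightarrow> 'g) \<Rightarrow> bool" where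
  "lie_automorphism br f \<longleftrightarrow> linear f \<and> bij f \<and> (\<forall>x y. f (br x y) = br (f x) (f y))"

definition cartan_involution :: "('g::euclidean_space \<Rightarrow> 'g \<Rightarrow> 'g) \<Rightarrow> ('g \<Rightarrow> 'g) \<Rightarrow> bool" where
  "cartan_involution br \<theta> \<longleftrightarrow> lie_automorphism br \<theta> \<and> (\<forall>x. \<theta> (\<theta> x) = x) \<and>
     (\<forall>x. x \<noteq> 0 \<longrightarrow> - killing br x (\<theta> x) > 0)"

definition kpart :: "('g::euclidean_space \<Rightarrow> 'g) \<Rightarrow> 'g set" where
  "kpart \<theta> = {x. \<theta> x = x}"

definition ppart :: "('g::euclidean_space \<Rightarrow> 'g) \<Rightarrow> 'g set" where
  "ppart \<theta> = {x. \<theta> x = - x}"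

definition abelian_sub :: "('g::euclidean_space \<Rightarrow> 'g \<Rightarrow> 'g) \<Rightarrow> 'g set \<Rightarrow> bool" where
  "abelian_sub br S \<longleftrightarrow> subspace S \<and> (\<forall>a\<in>S. \<forall>b\<in>S. br a b = 0)"

definition max_abelian_in_p ::
  "('g::euclidean_space \<Rightarrow> 'g \<Rightarrow> 'g) \<Rightarrow> ('g \<Rightarrow> 'g) \<Rightarrow> 'g set \<Rightarrow> bool" where
  "max_abelian_in_p br \<theta> A \<longleftrightarrow> abelian_sub br A \<and> A \<subseteq> ppart \<theta> \<and>
     (\<forall>B. abelian_sub br B \<and> A \<subseteq> B \<and> B \<subseteq> ppart \<theta> \<longrightarrow> B = A)"

text \<open>Elements of \<open>\<aa>\<^sup>*\<close> are represented by real functions on 'g which are linear on A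
  and vanish outside A (the values outside A are never used).\<close>
definition dual_a :: "'g::euclidean_space set \<Rightarrow> ('g \<Rightarrow> real) \<Rightarrow> bool" where
  "dual_a A \<alpha> \<longleftrightarrow> (\<forall>x\<in>A. \<forall>y\<in>A. \<alpha> (x + y) = \<alpha> x + \<alpha> y) \<and>
     (\<forall>c. \<forall>x\<in>A. \<alpha> (c *\<^sub>R x) = c * \<alpha> x) \<and> (\<forall>x. x \<notin> A \<longrightarrow> \<alpha> x = 0)"

definition root_space ::
  "('g::euclidean_space \<Rightarrow> 'g \<Rightarrow> 'g) \<Rightarrow> 'g set \<Rightarrow> ('g \<Rightarrow> real) \<Rightarrow> 'g set" where
  "root_space br A \<alpha> = {x. \<forall>a\<in>A. br a x = \<alpha> a *\<^sub>R x}"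

definition restricted_roots ::
  "('g::euclidean_space \<Rightarrow> 'g \<Rightarrow> 'g) \<Rightarrow> 'g set \<Rightarrow> ('g \<Rightarrow> real) set" where
  "restricted_roots br A = {\<alpha>. dual_a A \<alpha> \<and> (\<exists>a\<in>A. \<alpha> a \<noteq> 0) \<and> root_space br A \<alpha> \<noteq> {0}}"

definition weights :: "('g::euclidean_space \<Rightarrow> 'g \<Rightarrow> 'g) \<Rightarrow> 'g set \<Rightarrow> ('g \<Rightarrow> real) set" where
  "weights br A = insert (\<lambda>_. 0) (restricted_roots br A)"

definition regular_set :: "('g::euclidean_space \<Rightarrow> 'g \<Rightarrow> 'g) \<Rightarrow> 'g set \<Rightarrow> 'g set" where
  "regular_set br A = {a\<in>A. \<forall>\<alpha>\<in>restricted_roots br A. \<alpha> a \<noteq> 0}"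

definition weyl_chamber :: "('g::euclidean_space \<Rightarrow> 'g \<Rightarrow> 'g) \<Rightarrow> 'g set \<Rightarrow> 'g set \<Rightarrow> bool" where
  "weyl_chamber br A W \<longleftrightarrow> (\<exists>a0\<in>regular_set br A.
      W = closure (connected_component_set (regular_set br A) a0))"

definition th_inner :: "('g::euclidean_space \<Rightarrow> 'g \<Rightarrow> 'g) \<Rightarrow> ('g \<Rightarrow> 'g) \<Rightarrow> 'g \<Rightarrow> 'g \<Rightarrow> real" where
  "th_inner br \<theta> x y = - killing br x (\<theta> y)"

definition th_norm :: "('g::euclidean_space \<Rightarrow> 'g \<Rightarrow> 'g) \<Rightarrow> ('g \<Rightarrow> 'g) \<Rightarrow> 'g \<Rightarrow> real" where
  "th_norm br \<theta> x = sqrt (- killing br x (\<theta> x))"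

definition qform :: "('g::euclidean_space \<Rightarrow> 'g \<Rightarrow> 'g) \<Rightarrow> ('g \<Rightarrow> 'g) \<Rightarrow> ('g \<Rightarrow> 'g) \<Rightarrow> 'g \<Rightarrow> real" where
  "qform br \<theta> F x = (th_norm br \<theta> (F x))\<^sup>2"

definition th_proj :: "('g::euclidean_space \<Rightarrow> 'g \<Rightarrow> 'g) \<Rightarrow> ('g \<Rightarrow> 'g) \<Rightarrow> 'g set \<Rightarrow> 'g \<Rightarrow> 'g" where
  "th_proj br \<theta> V y = (THE z. z \<in> V \<and> (\<forall>w\<in>V. th_inner br \<theta> (y - z) w = 0))"

definition block_norm ::
  "('g::euclidean_space \<Rightarrow> 'g \<Rightarrow> 'g) \<Rightarrow> ('g \<Rightarrow> 'g) \<Rightarrow> 'g set \<Rightarrow> ('g \<Rightarrow> 'g)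
    \<Rightarrow> ('g \<Rightarrow> real) \<Rightarrow> ('g \<Rightarrow> real) \<Rightarrow> real" where
  "block_norm br \<theta> A H \<alpha> \<beta> =
     Sup {th_norm br \<theta> (th_proj br \<theta> (root_space br A \<beta>) (H x)) | x.
            x \<in> root_space br A \<alpha> \<and> th_norm br \<theta> x \<le> 1}"

definition op_exp :: "('g::euclidean_space \<Rightarrow> 'g) \<Rightarrow> 'g \<Rightarrow> 'g" where
  "op_exp f = (\<lambda>x. \<Sum>n. (1 / fact n) *\<^sub>R (f ^^ n) x)"

text \<open>Group-level data (abstracted): a group Gr, the adjoint representation Ad into the
  automorphisms of the Lie algebra, a subgroup K whose adjoint action commutes with theta,
  and the map expA : a -> A with Ad(exp a) = exp(ad a).\<close>
definition semisimple_group_data ::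
  "('G, 'b) monoid_scheme \<Rightarrow> ('g::euclidean_space \<Rightarrow> 'g \<Rightarrow> 'g) \<Rightarrow> ('g \<Rightarrow> 'g) \<Rightarrow> 'g set
    \<Rightarrow> ('G \<Rightarrow> 'g \<Rightarrow> 'g) \<Rightarrow> 'G set \<Rightarrow> ('g \<Rightarrow> 'G) \<Rightarrow> bool" where
  "semisimple_group_data Gr br \<theta> A Ad K expA \<longleftrightarrow>
     group Gr \<and> semisimple_lie_algebra br \<and> cartan_involution br \<theta> \<and> max_abelian_in_p br \<theta> A \<and>
     (\<forall>g\<in>carrier Gr. lie_automorphism br (Ad g)) \<and>
     (\<forall>g\<in>carrier Gr. \<forall>h\<in>carrier Gr. Ad (g \<otimes>\<^bsub>Gr\<^esub> h) = Ad g \<circ> Ad h) \<and>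
     subgroup K Gr \<and> (\<forall>k\<in>K. Ad k \<circ> \<theta> = \<theta> \<circ> Ad k) \<and>
     (\<forall>a\<in>A. expA a \<in> carrier Gr \<and> Ad (expA a) = op_exp (br a))"

definition KAK_decomp ::
  "('G, 'b) monoid_scheme \<Rightarrow> 'G set \<Rightarrow> ('g \<Rightarrow> 'G) \<Rightarrow> 'g set \<Rightarrow> 'G \<Rightarrow> 'G \<Rightarrow> 'g \<Rightarrow> 'G \<Rightarrow> bool" where
  "KAK_decomp Gr K expA W g k' \<kappa> k \<longleftrightarrow> k \<in> K \<and> k' \<in> K \<and> \<kappa> \<in> W \<and>
     g = k' \<otimes>\<^bsub>Gr\<^esub> expA \<kappa> \<otimes>\<^bsub>Gr\<^esub> k"

end

theory Submission
  imports Defs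
begin

text \<open>Write \<open>g = k' exp \<kappa> k\<close> and \<open>g' = h' exp \<kappa>' h\<close>. Since \<open>Ad K\<close> preserves the norm, evaluating
  \<open>q\<^sub>g \<le> C\<^sup>2 q\<^sub>g\<^sub>'\<close> at \<open>Ad (h\<^sup>-\<^sup>1) x\<close> for \<open>x \<in> \<gg>\<^sub>\<alpha>\<close> gives
  \<open>\<parallel>exp (ad \<kappa>) Ad (k h\<^sup>-\<^sup>1) x\<parallel> \<le> C e\<^bsup>\<alpha>(\<kappa>')\<^esup> \<parallel>x\<parallel>\<close>. Because \<open>\<kappa> \<in> \<pp>\<close>, \<open>ad \<kappa>\<close> is self-adjoint, so
  \<open>exp (ad \<kappa>)\<close> commutes with the orthogonal projection onto \<open>\<gg>\<^sub>\<beta>\<close>, on which it acts by \<open>e\<^bsup>\<beta>(\<kappa>)\<^esup>\<close>;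
  as the projection does not increase norms, dividing by \<open>e\<^bsup>\<beta>(\<kappa>)\<^esup>\<close> gives the bound.\<close>

lemma trace_op_diff: "trace_op (\<lambda>z. f z - g z) = trace_op f - trace_op g"
  by (simp add: trace_op_def inner_diff_left sum_subtractf)

lemma linear_eq_sum_Basis:
  assumes "linear f"
  shows "f y = (\<Sum>c\<in>Basis. inner y c *\<^sub>R f c)"
proof -
  have "f y = f (\<Sum>c\<in>Basis. inner y c *\<^sub>R c)" by (simp add: euclidean_representation)
  also have "\<dots> = (\<Sum>c\<in>Basis. inner y c *\<^sub>R f c)"
    using assms by (simp add: linear_sum linear_scale)
  finally show ?thesis .
qed

lemma trace_op_comp_commute:
  assumes f: "linear f" and g: "linear g"
  shows "trace_op (\<lambda>z. f (g z)) = trace_op (\<lambda>z. g (f z))"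
proof -
  have "trace_op (\<lambda>z. f (g z)) = (\<Sum>b\<in>Basis. \<Sum>c\<in>Basis. inner (g b) c * inner (f c) b)"
    unfolding trace_op_def by (subst linear_eq_sum_Basis[OF f]) (simp add: inner_sum_left)
  also have "\<dots> = (\<Sum>c\<in>Basis. \<Sum>b\<in>Basis. inner (f c) b * inner (g b) c)"
    by (subst sum.swap) (simp add: mult.commute)
  also have "\<dots> = trace_op (\<lambda>z. g (f z))"
    unfolding trace_op_def by (subst linear_eq_sum_Basis[OF g]) (simp add: inner_sum_left)
  finally show ?thesis .
qed

locale lie_alg =
  fixes br :: "'g::euclidean_space \<Rightarrow> 'g \<Rightarrow> 'g"
  assumes lie_algebra: "lie_algebra br"
begin

lemma linear_bracket_right: "linear (br x)"
  using lie_algebra by (simp add: lie_algebra_def)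

lemma linear_bracket_left: "linear (\<lambda>x. br x y)"
  using lie_algebra by (simp add: lie_algebra_def)

lemmas bracket_add_left = linear_add[OF linear_bracket_left]
  and bracket_scaleR_left = linear_scale[OF linear_bracket_left]
  and bracket_minus_left = linear_neg[OF linear_bracket_left]
  and bracket_add_right = linear_add[OF linear_bracket_right]
  and bracket_scaleR_right = linear_scale[OF linear_bracket_right]
  and bracket_diff_right = linear_diff[OF linear_bracket_right]
  and bracket_minus_right = linear_neg[OF linear_bracket_right]
  and bracket_zero_right = linear_0[OF linear_bracket_right]

lemma bracket_antisym: "br x y = - br y x"
proof -
  have "br (x + y) (x + y) = 0" "br x x = 0" "br y y = 0"
    using lie_algebra by (auto simp add: lie_algebra_def)
  then have "br x y + br y x = 0" by (simp add: bracket_add_left bracket_add_right add.commute)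
  then show ?thesis by (simp add: eq_neg_iff_add_eq_0)
qed

lemma bracket_bracket_left: "br (br a z) w = br a (br z w) - br z (br a w)"
proof -
  have "br a (br z w) + br z (br w a) + br w (br a z) = 0"
    using lie_algebra by (simp add: lie_algebra_def)
  then show ?thesis
    using bracket_antisym[of w "br a z"] bracket_antisym[of w a]
    by (simp add: bracket_minus_right algebra_simps)
qed

lemma killing_commute: "killing br x y = killing br y x"
  unfolding killing_def by (rule trace_op_comp_commute[OF linear_bracket_right linear_bracket_right])

lemma linear_killing_left: "linear (\<lambda>x. killing br x y)"
  unfolding killing_def trace_op_def
  by (rule linearI)
    (simp_all add: bracket_add_left bracket_scaleR_left inner_add_left sum.distrib sum_distrib_left)

lemma linear_killing_right: "linear (\<lambda>y. killing br x y)"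
  unfolding killing_def trace_op_def
  by (rule linearI)
    (simp_all add: bracket_add_left bracket_scaleR_left bracket_add_right bracket_scaleR_right
      inner_add_left sum.distrib sum_distrib_left)

lemma killing_bracket_left: "killing br (br a z) u = - killing br z (br a u)"
proof -
  have ad_ad: "linear (\<lambda>w. br p (br q w))" for p q
    by (rule linear_compose[OF linear_bracket_right linear_bracket_right, unfolded o_def])
  have "killing br (br a z) u =
      trace_op (\<lambda>w. br a (br z (br u w))) - trace_op (\<lambda>w. br z (br a (br u w)))"
    unfolding killing_def by (subst trace_op_diff[symmetric]) (simp add: bracket_bracket_left)
  moreover have "killing br z (br a u) =
      trace_op (\<lambda>w. br z (br a (br u w))) - trace_op (\<lambda>w. br z (br u (br a w)))"
    unfolding killing_def
    by (subst trace_op_diff[symmetric]) (simp add: bracket_bracket_left bracket_diff_right)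
  moreover have "trace_op (\<lambda>w. br a (br z (br u w))) = trace_op (\<lambda>w. br z (br u (br a w)))"
    by (rule trace_op_comp_commute[OF linear_bracket_right ad_ad])
  ultimately show ?thesis by simp
qed

lemma killing_lie_automorphism:
  assumes f: "lie_automorphism br f"
  shows "killing br (f x) (f y) = killing br x y"
proof -
  have lin: "linear f" and bij: "bij f" and hom: "\<And>x y. f (br x y) = br (f x) (f y)"
    using f by (auto simp: lie_automorphism_def)
  define g where "g = inv_into UNIV f"
  have lin_g: "linear g"
    unfolding g_def using inj_linear_imp_inv_linear[OF lin] bij by (simp add: bij_def)
  have fg: "f (g z) = z" and gf: "g (f z) = z" for z
    unfolding g_def using bij by (simp_all add: bij_def surj_f_inv_f inv_f_f)
  have "killing br (f x) (f y) = trace_op (\<lambda>z. f (br x (br y (g z))))"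
    by (simp add: killing_def hom fg)
  also have "\<dots> = trace_op (\<lambda>z. br x (br y (g (f z))))"
    by (rule trace_op_comp_commute[OF lin])
      (rule linear_compose[OF lin_g linear_compose[OF linear_bracket_right linear_bracket_right],
        unfolded o_def])
  also have "\<dots> = killing br x y" by (simp add: gf killing_def)
  finally show ?thesis .
qed

lemma subspace_root_space: "subspace (root_space br A \<beta>)"
  unfolding subspace_def root_space_def
  by (auto simp: bracket_zero_right bracket_add_right bracket_scaleR_right scaleR_add_right)

end

lemma orth_proj_unique:
  fixes ip :: "'a::real_vector \<Rightarrow> 'a \<Rightarrow> real"
  assumes lin: "\<And>y. linear (\<lambda>x. ip x y)" and pos: "\<And>x. x \<noteq> 0 \<Longrightarrow> ip x x > 0"
    and V: "subspace V"
    and z1: "z1 \<in> V" "\<forall>w\<in>V. ip (y - z1) w = 0"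
    and z2: "z2 \<in> V" "\<forall>w\<in>V. ip (y - z2) w = 0"
  shows "z1 = z2"
proof -
  have "z2 - z1 \<in> V" using z1 z2 V by (simp add: subspace_diff)
  then have "ip (z2 - z1) (z2 - z1) = 0"
    using z1 z2 linear_diff[OF lin, of "y - z1" "y - z2" "z2 - z1"] by simp
  then show ?thesis using pos[of "z2 - z1"] by (cases "z1 = z2") auto
qed

text \<open>Existence is a dimension count: the map \<open>z \<mapsto> \<Sum>b\<in>B. ip z b *\<^sub>R b\<close> for a basis \<open>B\<close>
  of \<open>V\<close> is injective on \<open>V\<close>, hence onto \<open>V\<close>, and \<open>y - z\<close> lies in its kernel.\<close>
lemma orth_proj_exists:
  fixes ip :: "'a::euclidean_space \<Rightarrow> 'a \<Rightarrow> real"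
  assumes lin_left: "\<And>y. linear (\<lambda>x. ip x y)" and lin_right: "\<And>x. linear (\<lambda>y. ip x y)"
    and pos: "\<And>x. x \<noteq> 0 \<Longrightarrow> ip x x > 0" and V: "subspace V"
  shows "\<exists>z\<in>V. \<forall>w\<in>V. ip (y - z) w = 0"
proof -
  obtain B where BV: "B \<subseteq> V" and indep: "independent B" and VB: "V \<subseteq> span B"
    by (rule basis_exists)
  have fin: "finite B" using indep by (rule finiteI_independent)
  have span: "span B = V" using BV VB V by (metis span_minimal subset_antisym)
  have orth: "ip u w = 0" if "\<forall>b\<in>B. ip u b = 0" "w \<in> V" for u w
  proof -
    have "subspace {w. ip u w = 0}"
      using lin_right[of u] by (simp add: subspace_def linear_add linear_scale linear_0)
    moreover have "B \<subseteq> {w. ip u w = 0}" using that(1) by blast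
    ultimately have "span B \<subseteq> {w. ip u w = 0}" by (rule span_minimal[rotated])
    then show ?thesis using that(2) span by blast
  qed
  define M where "M z = (\<Sum>b\<in>B. ip z b *\<^sub>R b)" for z
  have lin_M: "linear M" unfolding M_def
    by (rule linearI) (simp_all add: linear_add[OF lin_left] linear_scale[OF lin_left]
        scaleR_add_left sum.distrib scaleR_sum_right)
  have ker_M: "\<forall>b\<in>B. ip u b = 0" if "M u = 0" for u
  proof (rule ccontr)
    assume "\<not> (\<forall>b\<in>B. ip u b = 0)"
    then have "dependent B" using that unfolding M_def by (subst dependent_finite[OF fin]) auto
    then show False using indep by simp
  qed
  have M_V: "M z \<in> V" for z unfolding M_def using BV V
    by (intro subspace_sum subspace_scale) auto
  have "inj_on M V"
  proof (rule inj_onI)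
    fix x y assume "x \<in> V" "y \<in> V" "M x = M y"
    then have "ip (x - y) (x - y) = 0"
      using ker_M[of "x - y"] orth V lin_M by (simp add: linear_diff subspace_diff)
    then show "x = y" using pos[of "x - y"] by (cases "x = y") auto
  qed
  then have "dim (M ` V) = dim V"
    by (intro dim_image_eq[OF lin_M]) (use V in \<open>simp add: span_eq_iff[THEN iffD2]\<close>)
  then have "M ` V = V"
    using M_V V by (intro subspace_dim_equal linear_subspace_image[OF lin_M]) auto
  then obtain z where z: "z \<in> V" "M z = M y" using M_V[of y] by (metis imageE)
  then have "\<forall>b\<in>B. ip (y - z) b = 0" using lin_M ker_M by (simp add: linear_diff)
  then show ?thesis using z orth by blast
qed

lemma funpow_norm_le:
  fixes f :: "'a::real_normed_vector \<Rightarrow> 'a"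
  assumes "\<And>x. norm (f x) \<le> norm x * K" "K \<ge> 0"
  shows "norm ((f ^^ n) x) \<le> K ^ n * norm x"
proof (induction n)
  case (Suc n)
  have "norm ((f ^^ Suc n) x) \<le> norm ((f ^^ n) x) * K" using assms(1) by simp
  also have "\<dots> \<le> K ^ n * norm x * K" using Suc assms(2) by (simp add: mult_right_mono)
  finally show ?case by (simp add: algebra_simps)
qed simp

lemma op_exp_sums:
  fixes f :: "'g::euclidean_space \<Rightarrow> 'g"
  assumes "linear f"
  shows "(\<lambda>n. (1 / fact n) *\<^sub>R (f ^^ n) x) sums op_exp f x"
proof -
  obtain K where K: "K > 0" "\<And>x. norm (f x) \<le> norm x * K"
    using assms bounded_linear.pos_bounded by (auto simp: linear_conv_bounded_linear)
  have "summable (\<lambda>n. (1 / fact n) *\<^sub>R (f ^^ n) x)"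
  proof (rule summable_comparison_test')
    show "summable (\<lambda>n. inverse (fact n) * (K ^ n * norm x))"
      using summable_mult2[OF summable_exp, of K "norm x"] by (simp add: mult.assoc)
    show "norm ((1 / fact n) *\<^sub>R (f ^^ n) x) \<le> inverse (fact n) * (K ^ n * norm x)" for n
      using funpow_norm_le[of f K n x] K by (simp add: divide_inverse mult_left_mono)
  qed
  then show ?thesis by (simp add: op_exp_def summable_sums)
qed

lemma funpow_eigenvector:
  assumes "linear f" "f x = c *\<^sub>R x"
  shows "(f ^^ n) x = c ^ n *\<^sub>R x"
  by (induction n) (simp_all add: assms linear_scale[OF assms(1)])

lemma op_exp_eigenvector:
  assumes "linear f" "f x = c *\<^sub>R x"
  shows "op_exp f x = exp c *\<^sub>R x"
proof -
  have "(\<lambda>n. (1 / fact n) *\<^sub>R (f ^^ n) x) sums (exp c *\<^sub>R x)"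
    using sums_scaleR_left[OF exp_converges[of c], of x]
    by (simp add: funpow_eigenvector[OF assms] divide_inverse mult.commute)
  then show ?thesis using op_exp_sums[OF assms(1)] sums_unique2 by blast
qed

lemma weyl_chamber_subset:
  assumes "weyl_chamber br A W" "subspace A"
  shows "W \<subseteq> A"
proof -
  obtain a0 where "W = closure (connected_component_set (regular_set br A) a0)"
    using assms(1) by (auto simp: weyl_chamber_def)
  moreover have "connected_component_set (regular_set br A) a0 \<subseteq> A"
    using connected_component_subset[of "regular_set br A" a0] by (auto simp: regular_set_def)
  ultimately show ?thesis using closed_subspace[OF assms(2)] by (simp add: closure_minimal)
qed

locale cartan_lie_alg = lie_alg br for br :: "'g::euclidean_space \<Rightarrow> 'g \<Rightarrow> 'g" +
  fixes \<theta> :: "'g \<Rightarrow> 'g"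
  assumes cartan_involution: "cartan_involution br \<theta>"
begin

lemma theta_lie_automorphism: "lie_automorphism br \<theta>"
  using cartan_involution by (simp add: cartan_involution_def)

lemma theta_theta: "\<theta> (\<theta> x) = x"
  using cartan_involution by (simp add: cartan_involution_def)

lemma th_inner_commute: "th_inner br \<theta> x y = th_inner br \<theta> y x"
  using killing_lie_automorphism[OF theta_lie_automorphism, of "\<theta> x" y] killing_commute[of "\<theta> x" y]
  by (simp add: th_inner_def theta_theta)

lemma linear_th_inner_left: "linear (\<lambda>x. th_inner br \<theta> x y)"
  unfolding th_inner_def using linear_killing_left by (simp add: linear_compose_neg)

lemma linear_th_inner_right: "linear (\<lambda>y. th_inner br \<theta> x y)"
proof -
  have "linear \<theta>" using theta_lie_automorphism by (simp add: lie_automorphism_def)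
  then show ?thesis
    unfolding th_inner_def
    using linear_compose_neg[OF linear_compose[OF _ linear_killing_right]] by (simp add: o_def)
qed

lemmas th_inner_add_left = linear_add[OF linear_th_inner_left]
  and th_inner_diff_left = linear_diff[OF linear_th_inner_left]
  and th_inner_scaleR_left = linear_scale[OF linear_th_inner_left]
  and th_inner_zero_left = linear_0[OF linear_th_inner_left]
  and th_inner_add_right = linear_add[OF linear_th_inner_right]
  and th_inner_scaleR_right = linear_scale[OF linear_th_inner_right]

lemma th_inner_pos: "x \<noteq> 0 \<Longrightarrow> th_inner br \<theta> x x > 0"
  using cartan_involution by (simp add: cartan_involution_def th_inner_def)

lemma th_inner_nonneg: "th_inner br \<theta> x x \<ge> 0"
  using th_inner_pos[of x] th_inner_zero_left by (cases "x = 0") auto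

lemma th_norm_eq_sqrt: "th_norm br \<theta> x = sqrt (th_inner br \<theta> x x)"
  by (simp add: th_norm_def th_inner_def)

lemma th_norm_nonneg: "th_norm br \<theta> x \<ge> 0"
  by (simp add: th_norm_eq_sqrt th_inner_nonneg)

lemma th_norm_zero: "th_norm br \<theta> 0 = 0"
  by (simp add: th_norm_eq_sqrt th_inner_zero_left)

lemma th_norm_scaleR: "th_norm br \<theta> (c *\<^sub>R x) = \<bar>c\<bar> * th_norm br \<theta> x"
proof -
  have "th_inner br \<theta> (c *\<^sub>R x) (c *\<^sub>R x) = c\<^sup>2 * th_inner br \<theta> x x"
    by (simp add: th_inner_scaleR_left th_inner_scaleR_right power2_eq_square)
  then show ?thesis by (simp add: th_norm_eq_sqrt real_sqrt_mult)
qed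

lemma th_norm_le_of_qform_le:
  assumes "qform br \<theta> F x \<le> C\<^sup>2 * qform br \<theta> F' x" "C \<ge> 0"
  shows "th_norm br \<theta> (F x) \<le> C * th_norm br \<theta> (F' x)"
proof (rule power2_le_imp_le)
  show "(th_norm br \<theta> (F x))\<^sup>2 \<le> (C * th_norm br \<theta> (F' x))\<^sup>2"
    using assms(1) by (simp add: qform_def power_mult_distrib)
  show "0 \<le> C * th_norm br \<theta> (F' x)"
    using assms(2) th_norm_nonneg by simp
qed

lemma th_inner_lie_automorphism:
  assumes "lie_automorphism br f" "f \<circ> \<theta> = \<theta> \<circ> f"
  shows "th_inner br \<theta> (f x) (f y) = th_inner br \<theta> x y"
  using killing_lie_automorphism[OF assms(1), of x "\<theta> y"] fun_cong[OF assms(2), of y]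
  by (simp add: th_inner_def)

text \<open>Since \<open>\<theta>\<close> is a Lie automorphism, \<open>ad a\<close> is self-adjoint for \<open>a \<in> \<pp>\<close> by the invariance
  of the Killing form.\<close>
lemma th_inner_bracket_ppart:
  assumes "a \<in> ppart \<theta>"
  shows "th_inner br \<theta> (br a z) w = th_inner br \<theta> z (br a w)"
proof -
  have "\<theta> (br a w) = - br a (\<theta> w)"
    using theta_lie_automorphism assms by (simp add: lie_automorphism_def ppart_def bracket_minus_left)
  then show ?thesis
    using killing_bracket_left[of a z "\<theta> w"] linear_neg[OF linear_killing_right, of z]
    by (simp add: th_inner_def)
qed

lemma th_proj_eqI:
  assumes V: "subspace V" and z: "z \<in> V" "\<forall>w\<in>V. th_inner br \<theta> (y - z) w = 0"
  shows "th_proj br \<theta> V y = z"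
  unfolding th_proj_def
proof (rule the_equality)
  show "z' = z" if "z' \<in> V \<and> (\<forall>w\<in>V. th_inner br \<theta> (y - z') w = 0)" for z'
    using orth_proj_unique[where ip = "th_inner br \<theta>", OF linear_th_inner_left th_inner_pos V,
        of z' y z] that z
    by simp
qed (use z in simp)

lemma th_proj_in_orth:
  assumes V: "subspace V"
  shows "th_proj br \<theta> V y \<in> V" "\<forall>w\<in>V. th_inner br \<theta> (y - th_proj br \<theta> V y) w = 0"
proof -
  obtain z where "z \<in> V" "\<forall>w\<in>V. th_inner br \<theta> (y - z) w = 0"
    using orth_proj_exists[OF linear_th_inner_left linear_th_inner_right th_inner_pos V] by blast
  with th_proj_eqI[OF V] show "th_proj br \<theta> V y \<in> V"
      "\<forall>w\<in>V. th_inner br \<theta> (y - th_proj br \<theta> V y) w = 0"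
    by auto
qed

lemma th_norm_th_proj_le:
  assumes V: "subspace V"
  shows "th_norm br \<theta> (th_proj br \<theta> V y) \<le> th_norm br \<theta> y"
proof -
  define p where "p = th_proj br \<theta> V y"
  have orth: "th_inner br \<theta> (y - p) p = 0" "th_inner br \<theta> p (y - p) = 0"
    using th_proj_in_orth[OF V, of y] th_inner_commute by (auto simp: p_def)
  have "th_inner br \<theta> y y = th_inner br \<theta> (p + (y - p)) (p + (y - p))" by (metis add.commute diff_add_cancel)
  also have "\<dots> = th_inner br \<theta> p p + th_inner br \<theta> (y - p) (y - p)"
    by (simp only: th_inner_add_left th_inner_add_right orth add_0_right)
  finally have "th_inner br \<theta> p p \<le> th_inner br \<theta> y y"
    using th_inner_nonneg[of "y - p"] by simp
  then show ?thesis by (simp add: th_norm_eq_sqrt p_def)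
qed

lemma th_inner_op_exp_eigenvector:
  assumes lin: "linear f" and sym: "\<And>z w. th_inner br \<theta> (f z) w = th_inner br \<theta> z (f w)"
    and eig: "f w = c *\<^sub>R w"
  shows "th_inner br \<theta> (op_exp f z) w = exp c * th_inner br \<theta> z w"
proof -
  have power: "th_inner br \<theta> ((f ^^ n) z) w = c ^ n * th_inner br \<theta> z w" for n
  proof (induction n arbitrary: z)
    case (Suc n)
    have "th_inner br \<theta> ((f ^^ Suc n) z) w = c ^ n * th_inner br \<theta> (f z) w"
      using Suc by (simp add: funpow_Suc_right del: funpow.simps)
    then show ?case by (simp add: sym eig th_inner_scaleR_right)
  qed simp
  have "bounded_linear (\<lambda>y. th_inner br \<theta> y w)"
    using linear_th_inner_left by (simp add: linear_conv_bounded_linear)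
  from bounded_linear.sums[OF this op_exp_sums[OF lin, of z]]
  have "(\<lambda>n. c ^ n / fact n * th_inner br \<theta> z w) sums th_inner br \<theta> (op_exp f z) w"
    by (simp add: th_inner_scaleR_left power mult.commute)
  moreover have "(\<lambda>n. c ^ n / fact n * th_inner br \<theta> z w) sums (exp c * th_inner br \<theta> z w)"
    using sums_mult2[OF exp_converges[of c], of "th_inner br \<theta> z w"] by (simp add: divide_inverse mult_ac)
  ultimately show ?thesis by (rule sums_unique2)
qed

lemma th_proj_op_exp_bracket:
  assumes a: "a \<in> ppart \<theta>" and V: "subspace V" and eig: "\<And>w. w \<in> V \<Longrightarrow> br a w = c *\<^sub>R w"
  shows "th_proj br \<theta> V (op_exp (br a) z) = exp c *\<^sub>R th_proj br \<theta> V z"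
proof (rule th_proj_eqI[OF V])
  show "exp c *\<^sub>R th_proj br \<theta> V z \<in> V"
    using th_proj_in_orth(1)[OF V] V by (simp add: subspace_scale)
  have "th_inner br \<theta> (op_exp (br a) z) w = exp c * th_inner br \<theta> z w" if "w \<in> V" for w
    by (rule th_inner_op_exp_eigenvector[OF linear_bracket_right th_inner_bracket_ppart[OF a] eig[OF that]])
  then show "\<forall>w\<in>V. th_inner br \<theta> (op_exp (br a) z - exp c *\<^sub>R th_proj br \<theta> V z) w = 0"
    using th_proj_in_orth(2)[OF V, of z]
    by (simp add: th_inner_diff_left th_inner_scaleR_left right_diff_distrib)
qed

lemma th_norm_th_proj_op_exp_bracket:
  assumes a: "a \<in> ppart \<theta>" and V: "subspace V" and eig: "\<And>w. w \<in> V \<Longrightarrow> br a w = c *\<^sub>R w"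
  shows "exp c * th_norm br \<theta> (th_proj br \<theta> V z) \<le> th_norm br \<theta> (op_exp (br a) z)"
proof -
  have "exp c * th_norm br \<theta> (th_proj br \<theta> V z) = th_norm br \<theta> (th_proj br \<theta> V (op_exp (br a) z))"
    by (simp add: th_proj_op_exp_bracket[OF assms] th_norm_scaleR)
  also have "\<dots> \<le> th_norm br \<theta> (op_exp (br a) z)"
    by (rule th_norm_th_proj_le[OF V])
  finally show ?thesis .
qed

end

locale real_semisimple_group =
  fixes Gr :: "('G, 'b) monoid_scheme"
    and br :: "'g::euclidean_space \<Rightarrow> 'g \<Rightarrow> 'g" and \<theta> :: "'g \<Rightarrow> 'g"
    and A :: "'g set" and Ad :: "'G \<Rightarrow> 'g \<Rightarrow> 'g" and K :: "'G set" and expA :: "'g \<Rightarrow> 'G"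
  assumes data: "semisimple_group_data Gr br \<theta> A Ad K expA"
begin

sublocale cartan_lie_alg br \<theta>
  using data by unfold_locales (auto simp: semisimple_group_data_def semisimple_lie_algebra_def)

sublocale group Gr
  using data by (simp add: semisimple_group_data_def)

lemma subspace_A: "subspace A" and A_subset_ppart: "A \<subseteq> ppart \<theta>"
  using data by (auto simp: semisimple_group_data_def max_abelian_in_p_def abelian_sub_def)

lemma Ad_mult: "x \<in> carrier Gr \<Longrightarrow> y \<in> carrier Gr \<Longrightarrow> Ad (x \<otimes>\<^bsub>Gr\<^esub> y) = Ad x \<circ> Ad y"
  using data by (simp add: semisimple_group_data_def)

lemma K_subset_carrier: "K \<subseteq> carrier Gr"
  using data subgroup.subset by (auto simp: semisimple_group_data_def)

lemma Ad_one: "Ad \<one>\<^bsub>Gr\<^esub> x = x"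
proof -
  have "inj (Ad \<one>\<^bsub>Gr\<^esub>)"
    using data by (simp add: semisimple_group_data_def lie_automorphism_def bij_def)
  moreover have "Ad \<one>\<^bsub>Gr\<^esub> (Ad \<one>\<^bsub>Gr\<^esub> x) = Ad \<one>\<^bsub>Gr\<^esub> x"
    by (metis Ad_mult comp_apply l_one one_closed)
  ultimately show ?thesis by (simp add: inj_eq)
qed

lemma Ad_inv_cancel: "h \<in> carrier Gr \<Longrightarrow> Ad h (Ad (inv\<^bsub>Gr\<^esub> h) x) = x"
  by (metis Ad_mult Ad_one comp_apply inv_closed r_inv)

lemma th_norm_Ad_K: "u \<in> K \<Longrightarrow> th_norm br \<theta> (Ad u v) = th_norm br \<theta> v"
  using data K_subset_carrier th_inner_lie_automorphism[of "Ad u" v v]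
  by (auto simp: semisimple_group_data_def th_norm_eq_sqrt)

lemma Ad_KAK:
  assumes "KAK_decomp Gr K expA W g k' \<kappa> k" "W \<subseteq> A"
  shows "Ad g = Ad k' \<circ> op_exp (br \<kappa>) \<circ> Ad k"
proof -
  have "\<kappa> \<in> A" "k \<in> carrier Gr" "k' \<in> carrier Gr" "g = k' \<otimes>\<^bsub>Gr\<^esub> expA \<kappa> \<otimes>\<^bsub>Gr\<^esub> k"
    using assms K_subset_carrier by (auto simp: KAK_decomp_def)
  moreover have "expA \<kappa> \<in> carrier Gr \<and> Ad (expA \<kappa>) = op_exp (br \<kappa>)"
    using data \<open>\<kappa> \<in> A\<close> by (simp add: semisimple_group_data_def)
  ultimately show ?thesis by (simp add: Ad_mult)
qed

lemma th_norm_op_exp_Ad_le: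
  assumes dec_g: "KAK_decomp Gr K expA W g k' \<kappa> k"
    and dec_g': "KAK_decomp Gr K expA W g' h' \<kappa>' h"
    and W: "W \<subseteq> A" and C: "C \<ge> 0"
    and q: "\<forall>y. qform br \<theta> (Ad g) y \<le> C\<^sup>2 * qform br \<theta> (Ad g') y"
    and x: "x \<in> root_space br A \<alpha>"
  shows "th_norm br \<theta> (op_exp (br \<kappa>) (Ad (k \<otimes>\<^bsub>Gr\<^esub> inv\<^bsub>Gr\<^esub> h) x)) \<le> C * exp (\<alpha> \<kappa>') * th_norm br \<theta> x"
proof -
  have K: "k \<in> K" "k' \<in> K" "h \<in> K" "h' \<in> K" and "\<kappa>' \<in> A"
    using dec_g dec_g' W by (auto simp: KAK_decomp_def)
  then have carrier: "k \<in> carrier Gr" "h \<in> carrier Gr" "inv\<^bsub>Gr\<^esub> h \<in> carrier Gr"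
    using K_subset_carrier by auto
  define y where "y = Ad (inv\<^bsub>Gr\<^esub> h) x"
  have "op_exp (br \<kappa>') x = exp (\<alpha> \<kappa>') *\<^sub>R x"
    using x \<open>\<kappa>' \<in> A\<close> by (intro op_exp_eigenvector linear_bracket_right) (simp add: root_space_def)
  then have "Ad g' y = Ad h' (exp (\<alpha> \<kappa>') *\<^sub>R x)"
    using Ad_KAK[OF dec_g' W] Ad_inv_cancel carrier by (simp add: y_def)
  then have "th_norm br \<theta> (Ad g' y) = exp (\<alpha> \<kappa>') * th_norm br \<theta> x"
    using th_norm_Ad_K K by (simp add: th_norm_scaleR)
  moreover have "Ad g y = Ad k' (op_exp (br \<kappa>) (Ad (k \<otimes>\<^bsub>Gr\<^esub> inv\<^bsub>Gr\<^esub> h) x))"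
    using Ad_KAK[OF dec_g W] Ad_mult carrier by (simp add: y_def)
  ultimately show ?thesis
    using th_norm_le_of_qform_le[OF q[rule_format, of y] C] th_norm_Ad_K K by (simp add: mult.assoc)
qed

lemma block_norm_Ad_le:
  assumes dec_g: "KAK_decomp Gr K expA W g k' \<kappa> k"
    and dec_g': "KAK_decomp Gr K expA W g' h' \<kappa>' h"
    and W: "W \<subseteq> A" and C: "C \<ge> 0"
    and q: "\<forall>y. qform br \<theta> (Ad g) y \<le> C\<^sup>2 * qform br \<theta> (Ad g') y"
  shows "block_norm br \<theta> A (Ad (k \<otimes>\<^bsub>Gr\<^esub> inv\<^bsub>Gr\<^esub> h)) \<alpha> \<beta> \<le> C * exp (\<alpha> \<kappa>' - \<beta> \<kappa>)"
proof -
  have "\<kappa> \<in> A" using dec_g W by (auto simp: KAK_decomp_def)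
  have bound: "th_norm br \<theta> (th_proj br \<theta> (root_space br A \<beta>) (Ad (k \<otimes>\<^bsub>Gr\<^esub> inv\<^bsub>Gr\<^esub> h) x))
      \<le> C * exp (\<alpha> \<kappa>' - \<beta> \<kappa>)"
    if x: "x \<in> root_space br A \<alpha>" "th_norm br \<theta> x \<le> 1" for x
  proof -
    have "exp (\<beta> \<kappa>) * th_norm br \<theta> (th_proj br \<theta> (root_space br A \<beta>) (Ad (k \<otimes>\<^bsub>Gr\<^esub> inv\<^bsub>Gr\<^esub> h) x))
        \<le> th_norm br \<theta> (op_exp (br \<kappa>) (Ad (k \<otimes>\<^bsub>Gr\<^esub> inv\<^bsub>Gr\<^esub> h) x))"
      using \<open>\<kappa> \<in> A\<close> A_subset_ppart
      by (intro th_norm_th_proj_op_exp_bracket subspace_root_space) (auto simp: root_space_def)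
    also have "\<dots> \<le> C * exp (\<alpha> \<kappa>') * th_norm br \<theta> x"
      by (rule th_norm_op_exp_Ad_le[OF dec_g dec_g' W C q x(1)])
    also have "\<dots> \<le> C * exp (\<alpha> \<kappa>')"
      using x(2) C by (simp add: mult_left_le)
    finally show ?thesis by (simp add: exp_diff field_simps)
  qed
  have "0 \<in> root_space br A \<alpha>" by (rule subspace_0[OF subspace_root_space])
  then show ?thesis
    unfolding block_norm_def using bound th_norm_zero by (intro cSup_least) auto
qed

end

theorem lemma3:
  fixes Gr :: "('G, 'b) monoid_scheme"
    and br :: "'g::euclidean_space \<Rightarrow> 'g \<Rightarrow> 'g" and \<theta> :: "'g \<Rightarrow> 'g"
    and A W :: "'g set" and Ad :: "'G \<Rightarrow> 'g \<Rightarrow> 'g" and K :: "'G set"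
    and expA :: "'g \<Rightarrow> 'G"
    and g g' k k' h h' :: 'G and \<kappa> \<kappa>' :: 'g and C :: real
  assumes data: "semisimple_group_data Gr br \<theta> A Ad K expA"
    and chamber: "weyl_chamber br A W"
    and KAK: "\<forall>x\<in>carrier Gr. \<exists>k1 k1' \<kappa>1. KAK_decomp Gr K expA W x k1' \<kappa>1 k1"
    and g: "g \<in> carrier Gr" and g': "g' \<in> carrier Gr"
    and dec_g: "KAK_decomp Gr K expA W g k' \<kappa> k"
    and dec_g': "KAK_decomp Gr K expA W g' h' \<kappa>' h"
    and C: "C \<ge> 1"
    and q: "\<forall>x. qform br \<theta> (Ad g) x \<le> C\<^sup>2 * qform br \<theta> (Ad g') x"
  shows "\<forall>\<alpha>\<in>weights br A. \<forall>\<beta>\<in>weights br A.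
           block_norm br \<theta> A (Ad (k \<otimes>\<^bsub>Gr\<^esub> inv\<^bsub>Gr\<^esub> h)) \<alpha> \<beta> \<le> C * exp (\<alpha> \<kappa>' - \<beta> \<kappa>)"
proof (intro ballI)
  fix \<alpha> \<beta>
  interpret real_semisimple_group Gr br \<theta> A Ad K expA
    by (rule real_semisimple_group.intro[OF data])
  have "W \<subseteq> A" by (rule weyl_chamber_subset[OF chamber subspace_A])
  then show "block_norm br \<theta> A (Ad (k \<otimes>\<^bsub>Gr\<^esub> inv\<^bsub>Gr\<^esub> h)) \<alpha> \<beta> \<le> C * exp (\<alpha> \<kappa>' - \<beta> \<kappa>)"
    using block_norm_Ad_le[OF dec_g dec_g' _ _ q] C by simp
qed

end
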